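(* Let $F$ be an $m\times n$ matrix, $B$ an $m\times p$ matrix and $H$ an $l\times n$ matrix. Let $x\in\mathbb{R}^n$ satisfy $Fx=Bf$ and let the observed data be $y=Hx+g\in\mathbb{R}^l$, where $(f,g)\in\mathbb{R}^p\times\mathbb{R}^l$ is deterministic and unknown, belonging to $$\mathscr G=\{(f,g):(Q_1f,f)_p+(Q_2g,g)_l\le 1\},$$ with $Q_1$ ($p\times p$) and $Q_2$ ($l\times l$) symmetric positive definite. Let $\mathscr F=\{F'z+H'u:z\in\mathbb{R}^m,u\in\mathbb{R}^l\}$ and $\ell\in\mathscr F$. Then the minimax a posteriori estimate of $\ell(x)=(\ell,x)_n$ is $$\widehat{\ell(x)}=(\ell,\hat x)_n=(Q_2Hp,y)_l,$$ and the minimax a posteriori error is $$\hat\sigma=[1-(y-H\hat x,Q_2y)_l]^{1/2}(\ell,p)_n^{1/2},$$ where $p$ (together with some $\hat z$) solves $Fp=BQ_1^{-1}B'\hat z,\ F'\hat z=\ell-H'Q_2Hp$, and $\hat x$ (together with some $\hat p$) solves $F\hat x=BQ_1^{-1}B'\hat p,\ F'\hat p=H'Q_2(y-H\hat x)$. If $\ell\notin\mathscr F$, the minimax a posteriori error is infinite.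
   Context: $(\cdot,\cdot)_k$ is the Euclidean inner product on $\mathbb{R}^k$. Set $X=\{x\in\mathbb{R}^n:\exists (f,g)\in\mathscr G \text{ with } Fx=Bf,\ y-Hx=g\}$. The minimax a posteriori estimate of $\ell(x)$ is a number $\widehat{\ell(x)}$ with $\sup_{x\in X}|\ell(x)-\widehat{\ell(x)}|=\inf_{\tilde x\in X}\sup_{x\in X}|\ell(x)-\ell(\tilde x)|$, and $\hat\sigma=\sup_{x\in X}|\ell(x)-\widehat{\ell(x)}|$ is the minimax a posteriori error. *)

theory Defs
  imports "HOL-Analysis.Analysis"
begin

definition sym_pos_def :: "real^'k^'k \<Rightarrow> bool" where
  "sym_pos_def Q \<longleftrightarrow> transpose Q = Q \<and> (\<forall>v. v \<noteq> 0 \<longrightarrow> (Q *v v) \<bullet> v > 0)"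

definition unc_set :: "real^'p^'p \<Rightarrow> real^'l^'l \<Rightarrow> ((real^'p) \<times> (real^'l)) set" where
  "unc_set Q1 Q2 = {(f, g). (Q1 *v f) \<bullet> f + (Q2 *v g) \<bullet> g \<le> 1}"

definition adm_set ::
  "real^'n^'m \<Rightarrow> real^'p^'m \<Rightarrow> real^'n^'l \<Rightarrow> real^'p^'p \<Rightarrow> real^'l^'l \<Rightarrow> real^'l \<Rightarrow> (real^'n) set" where
  "adm_set F B H Q1 Q2 y = {x. \<exists>(f, g) \<in> unc_set Q1 Q2. F *v x = B *v f \<and> y - H *v x = g}"

definition post_error ::
  "real^'n^'m \<Rightarrow> real^'p^'m \<Rightarrow> real^'n^'l \<Rightarrow> real^'p^'p \<Rightarrow> real^'l^'l \<Rightarrow> real^'l \<Rightarrow> real^'n \<Rightarrow> real \<Rightarrow> ereal" where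
  "post_error F B H Q1 Q2 y ell c = (SUP x \<in> adm_set F B H Q1 Q2 y. ereal \<bar>ell \<bullet> x - c\<bar>)"

definition is_minimax_est ::
  "real^'n^'m \<Rightarrow> real^'p^'m \<Rightarrow> real^'n^'l \<Rightarrow> real^'p^'p \<Rightarrow> real^'l^'l \<Rightarrow> real^'l \<Rightarrow> real^'n \<Rightarrow> real \<Rightarrow> bool" where
  "is_minimax_est F B H Q1 Q2 y ell c \<longleftrightarrow>
     post_error F B H Q1 Q2 y ell c =
     (INF xt \<in> adm_set F B H Q1 Q2 y. SUP x \<in> adm_set F B H Q1 Q2 y. ereal \<bar>ell \<bullet> x - ell \<bullet> xt\<bar>)"

definition est_class :: "real^'n^'m \<Rightarrow> real^'n^'l \<Rightarrow> (real^'n) set" where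
  "est_class F H = {transpose F *v z + transpose H *v u | z u. True}"

end

theory Submission
  imports Defs
begin

text \<open>
  A point x is admissible iff some f satisfies Fx = Bf and (Q1 f, f) + (Q2 (y - Hx), y - Hx) <= 1.
  The second system says that the residual of (xh, Q1^-1 B' ph) is orthogonal to the constraint
  space {(e, d). Be = Fd}, so this misfit splits into its minimum (y - H xh, Q2 y) plus the
  weighted norm (Q1 e, e) + (Q2 H d, H d) of the deviation (e, d). The first system represents ell
  on the constraint space as the weighted inner product with (Q1^-1 B' zh, p), whose weighted norm
  is (ell, p). Cauchy-Schwarz therefore confines ell(X) to the interval of radius
  [1 - (y - H xh, Q2 y)]^(1/2) (ell, p)^(1/2) around ell(xh), and the points xh +- t p attain both
  ends, so ell(xh) is the unique minimax estimate.

  Both systems are solvable by the Fredholm alternative for a self-adjoint operator whose kernel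
  lies in ker F \<inter> ker H. If ell is not in the class, some r in ker F \<inter> ker H has
  (ell, r) \<noteq> 0, and X contains the whole line x + R r.
\<close>

lemma inner_matrix_vector_transpose: "((M::real^'a^'b) *v a) \<bullet> b = a \<bullet> (transpose M *v b)"
  by (metis dot_lmul_matrix inner_commute transpose_matrix_vector)

lemma inner_transpose_matrix_vector: "(transpose (M::real^'a^'b) *v a) \<bullet> b = a \<bullet> (M *v b)"
  using inner_matrix_vector_transpose[of "transpose M"] by simp

lemma in_range_iff_orthogonal_kernel:
  fixes f :: "'a::euclidean_space \<Rightarrow> 'b::euclidean_space"
  assumes f: "linear f" and adj: "\<And>x y. f x \<bullet> y = x \<bullet> g y"
  shows "b \<in> range f \<longleftrightarrow> (\<forall>y. g y = 0 \<longrightarrow> b \<bullet> y = 0)"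
proof -
  have "adjoint f = g" by (rule adjoint_unique) (use adj in blast)
  then have "(range f)\<^sup>\<bottom> = g -` {0}"
    using ker_orthogonal_comp_adjoint[OF adjoint_linear[OF f]] adjoint_adjoint[OF f] by simp
  moreover have "range f = (range f)\<^sup>\<bottom>\<^sup>\<bottom>"
    by (simp add: orthogonal_comp_self linear_subspace_image[OF f subspace_UNIV])
  ultimately show ?thesis
    by (auto simp: orthogonal_comp_def orthogonal_def inner_commute)
qed

lemma quadratic_nonneg_imp_discriminant_le:
  fixes a b c :: real
  assumes nonneg: "\<And>t. 0 \<le> a - 2*t*b + t^2*c" and "0 \<le> c"
  shows "b^2 \<le> a*c"
proof (cases "c = 0")
  case True
  have "b = 0"
  proof (rule ccontr)
    assume "b \<noteq> 0"
    then show False using nonneg[of "(a+1)/(2*b)"] True by (simp add: field_simps)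
  qed
  then show ?thesis using True by simp
next
  case False
  then have "0 < c" using \<open>0 \<le> c\<close> by simp
  have "0 \<le> a - 2*(b/c)*b + (b/c)^2*c" by (rule nonneg)
  also have "\<dots> = (a*c - b^2)/c" using \<open>0 < c\<close> by (simp add: field_simps power2_eq_square)
  finally show ?thesis using \<open>0 < c\<close> by (simp add: zero_le_divide_iff)
qed

lemma bilinear_Cauchy_Schwarz:
  fixes \<beta> :: "'a::real_vector \<Rightarrow> 'a \<Rightarrow> real"
  assumes bil: "bilinear \<beta>" and sym: "\<And>u v. \<beta> u v = \<beta> v u" and nonneg: "\<And>u. 0 \<le> \<beta> u u"
  shows "(\<beta> u v)^2 \<le> \<beta> u u * \<beta> v v"
proof (rule quadratic_nonneg_imp_discriminant_le)
  fix t :: real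
  have "\<beta> (u - t *\<^sub>R v) (u - t *\<^sub>R v) = \<beta> u u - 2*t*\<beta> u v + t^2 * \<beta> v v"
    using sym[of v u]
    by (simp add: bilinear_lsub[OF bil] bilinear_rsub[OF bil] bilinear_lmul[OF bil]
        bilinear_rmul[OF bil] power2_eq_square algebra_simps)
  then show "0 \<le> \<beta> u u - 2*t*\<beta> u v + t^2 * \<beta> v v" using nonneg by metis
qed (rule nonneg)

lemma SUP_abs_diff_eq_radius:
  fixes \<phi> :: "'a \<Rightarrow> real"
  assumes bound: "\<And>x. x \<in> X \<Longrightarrow> \<bar>\<phi> x - c0\<bar> \<le> r"
    and a: "a \<in> X" "\<phi> a = c0 + r" and b: "b \<in> X" "\<phi> b = c0 - r"
  shows "(SUP x\<in>X. ereal \<bar>\<phi> x - c\<bar>) = ereal (r + \<bar>c - c0\<bar>)"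
proof (rule antisym)
  show "(SUP x\<in>X. ereal \<bar>\<phi> x - c\<bar>) \<le> ereal (r + \<bar>c - c0\<bar>)"
    using bound by (force intro: SUP_least)
  have "0 \<le> r" using bound[OF a(1)] a(2) by simp
  then show "ereal (r + \<bar>c - c0\<bar>) \<le> (SUP x\<in>X. ereal \<bar>\<phi> x - c\<bar>)"
    using a b by (cases "c \<le> c0") (force intro: SUP_upper2)+
qed

context
  fixes Q :: "real^'k^'k"
  assumes Q: "sym_pos_def Q"
begin

lemma sym_pos_def_inner_commute: "(Q *v a) \<bullet> b = a \<bullet> (Q *v b)"
  using Q by (metis inner_matrix_vector_transpose sym_pos_def_def)

lemma sym_pos_def_form_nonneg: "0 \<le> (Q *v v) \<bullet> v"
  using Q unfolding sym_pos_def_def by (metis inner_zero_right order_le_less)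

lemma sym_pos_def_form_eq_0_iff: "(Q *v v) \<bullet> v = 0 \<longleftrightarrow> v = 0"
  using Q unfolding sym_pos_def_def by (metis inner_zero_right less_irrefl)

lemma sym_pos_def_form_add:
  "(Q *v (a + b)) \<bullet> (a + b) = (Q *v a) \<bullet> a + 2 * ((Q *v a) \<bullet> b) + (Q *v b) \<bullet> b"
  using sym_pos_def_inner_commute[of b a]
  by (simp add: matrix_vector_right_distrib inner_add_left inner_add_right inner_commute
      del: transpose_matrix_vector)

lemma sym_pos_def_form_diff:
  "(Q *v (a - b)) \<bullet> (a - b) = (Q *v a) \<bullet> a - 2 * ((Q *v a) \<bullet> b) + (Q *v b) \<bullet> b"
  using sym_pos_def_inner_commute[of b a]
  by (simp add: matrix_vector_mult_diff_distrib inner_diff_left inner_diff_right inner_commute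
      del: transpose_matrix_vector)

lemma sym_pos_def_matrix_inv_cancel: "Q *v (matrix_inv Q *v v) = v"
proof -
  have "\<forall>v. Q *v v = 0 \<longrightarrow> v = 0"
    using sym_pos_def_form_eq_0_iff by force
  then have "invertible Q"
    using invertible_left_inverse matrix_left_invertible_ker by blast
  then have "Q ** matrix_inv Q = mat 1"
    unfolding invertible_def matrix_inv_def by (rule someI2_ex) simp
  then show ?thesis by (simp add: matrix_vector_mul_assoc)
qed

end

lemma est_class_iff_orthogonal_kernel:
  fixes F :: "real^'n^'m" and H :: "real^'n^'l"
  shows "ell \<in> est_class F H \<longleftrightarrow> (\<forall>u. F *v u = 0 \<and> H *v u = 0 \<longrightarrow> ell \<bullet> u = 0)"
proof -
  define T where "T = (\<lambda>(z, w). transpose F *v z + transpose H *v w :: real^'n)"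
  have "linear T"
    unfolding T_def by (rule linearI) (auto simp: algebra_simps simp del: transpose_matrix_vector)
  moreover have "T zw \<bullet> u = zw \<bullet> (F *v u, H *v u)" for zw u
    by (cases zw) (simp add: T_def inner_add_left inner_transpose_matrix_vector
        del: transpose_matrix_vector)
  ultimately have "ell \<in> range T \<longleftrightarrow> (\<forall>u. (F *v u, H *v u) = 0 \<longrightarrow> ell \<bullet> u = 0)"
    by (rule in_range_iff_orthogonal_kernel)
  moreover have "est_class F H = range T"
    unfolding est_class_def T_def by auto
  ultimately show ?thesis by (simp add: zero_prod_def)
qed

lemma post_error_infinite:
  assumes x: "x \<in> adm_set F B H Q1 Q2 y" and ell: "ell \<notin> est_class F H"
  shows "post_error F B H Q1 Q2 y ell c = \<infinity>"
proof -
  obtain r where "F *v r = 0" "H *v r = 0" and ell_r: "ell \<bullet> r \<noteq> 0"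
    using ell est_class_iff_orthogonal_kernel by blast
  then have line: "x + s *\<^sub>R r \<in> adm_set F B H Q1 Q2 y" for s
    using x by (simp add: adm_set_def matrix_vector_right_distrib matrix_vector_mult_scaleR)
  show ?thesis unfolding post_error_def
  proof (rule SUP_PInfty)
    fix n :: nat
    define s where "s = (real n + \<bar>ell \<bullet> x - c\<bar>) / (ell \<bullet> r)"
    have "real n \<le> \<bar>ell \<bullet> (x + s *\<^sub>R r) - c\<bar>"
      using ell_r by (simp add: s_def inner_add_right)
    then show "\<exists>x\<in>adm_set F B H Q1 Q2 y. ereal (real n) \<le> ereal \<bar>ell \<bullet> x - c\<bar>"
      using line by auto
  qed
qed

definition dual_noise :: "real^'p^'p \<Rightarrow> real^'p^'m \<Rightarrow> real^'m \<Rightarrow> real^'p"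
  where "dual_noise Q1 B v = matrix_inv Q1 *v (transpose B *v v)"

definition misfit :: "real^'p^'p \<Rightarrow> real^'l^'l \<Rightarrow> real^'n^'l \<Rightarrow> real^'l \<Rightarrow> real^'n \<Rightarrow> real^'p \<Rightarrow> real"
  where "misfit Q1 Q2 H y x f = (Q1 *v f) \<bullet> f + (Q2 *v (y - H *v x)) \<bullet> (y - H *v x)"

definition weighted_inner ::
  "real^'p^'p \<Rightarrow> real^'l^'l \<Rightarrow> real^'n^'l \<Rightarrow> (real^'p) \<times> (real^'n) \<Rightarrow> (real^'p) \<times> (real^'n) \<Rightarrow> real"
  where "weighted_inner Q1 Q2 H u v = (Q1 *v fst u) \<bullet> fst v + (Q2 *v (H *v snd u)) \<bullet> (H *v snd v)"

lemma matrix_vector_dual_noise: "B *v dual_noise Q1 B v = (B ** matrix_inv Q1 ** transpose B) *v v"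
  by (simp add: dual_noise_def matrix_vector_mul_assoc matrix_mul_assoc del: transpose_matrix_vector)

lemma adm_set_eq_misfit:
  "adm_set F B H Q1 Q2 y = {x. \<exists>f. F *v x = B *v f \<and> misfit Q1 Q2 H y x f \<le> 1}"
  unfolding adm_set_def unc_set_def misfit_def by auto

lemma bilinear_weighted_inner: "bilinear (weighted_inner Q1 Q2 H)"
  unfolding bilinear_def weighted_inner_def
  by (auto intro!: linearI simp: matrix_vector_right_distrib matrix_vector_mult_scaleR
      inner_add_left inner_add_right distrib_left simp del: transpose_matrix_vector)

context
  fixes F :: "real^'n^'m" and B :: "real^'p^'m" and H :: "real^'n^'l"
    and Q1 :: "real^'p^'p" and Q2 :: "real^'l^'l"
  assumes Q1: "sym_pos_def Q1" and Q2: "sym_pos_def Q2"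
begin

lemma matrix_vector_dual_noise_cancel: "Q1 *v dual_noise Q1 B v = transpose B *v v"
  unfolding dual_noise_def by (rule sym_pos_def_matrix_inv_cancel[OF Q1])

lemma constraint_dual_pairing:
  assumes "B *v e = F *v d"
  shows "(Q1 *v dual_noise Q1 B v) \<bullet> e = (transpose F *v v) \<bullet> d"
  using assms by (simp add: matrix_vector_dual_noise_cancel inner_transpose_matrix_vector
      del: transpose_matrix_vector)

lemma matrix_inv_congruence_inner_commute:
  "((B ** matrix_inv Q1 ** transpose B) *v v) \<bullet> w = v \<bullet> ((B ** matrix_inv Q1 ** transpose B) *v w)"
proof -
  have "(B *v dual_noise Q1 B v) \<bullet> w = (Q1 *v dual_noise Q1 B v) \<bullet> dual_noise Q1 B w"
    using matrix_vector_dual_noise_cancel[of w] sym_pos_def_inner_commute[OF Q1]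
    by (metis inner_matrix_vector_transpose)
  also have "\<dots> = v \<bullet> (B *v dual_noise Q1 B w)"
    by (simp add: matrix_vector_dual_noise_cancel inner_transpose_matrix_vector
        del: transpose_matrix_vector)
  finally show ?thesis by (simp only: matrix_vector_dual_noise)
qed

lemma weighted_inner_commute: "weighted_inner Q1 Q2 H u v = weighted_inner Q1 Q2 H v u"
  unfolding weighted_inner_def
  using sym_pos_def_inner_commute[OF Q1] sym_pos_def_inner_commute[OF Q2] by (metis inner_commute)

lemma weighted_inner_nonneg: "0 \<le> weighted_inner Q1 Q2 H u u"
  unfolding weighted_inner_def using Q1 Q2 by (simp add: sym_pos_def_form_nonneg)

lemma weighted_inner_Cauchy_Schwarz:
  "(weighted_inner Q1 Q2 H u v)^2 \<le> weighted_inner Q1 Q2 H u u * weighted_inner Q1 Q2 H v v"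
  using bilinear_Cauchy_Schwarz[OF bilinear_weighted_inner weighted_inner_commute weighted_inner_nonneg] .

lemma saddle_kernel:
  assumes "transpose H *v (Q2 *v (H *v u)) + transpose F *v v = 0"
    and "F *v u = (B ** matrix_inv Q1 ** transpose B) *v v"
  shows "H *v u = 0" "F *v u = 0"
proof -
  let ?e = "dual_noise Q1 B v"
  have Be: "B *v ?e = F *v u"
    using assms(2) by (simp add: matrix_vector_dual_noise)
  have "0 = (transpose H *v (Q2 *v (H *v u)) + transpose F *v v) \<bullet> u"
    using assms(1) by simp
  also have "\<dots> = (Q2 *v (H *v u)) \<bullet> (H *v u) + (Q1 *v ?e) \<bullet> ?e"
    by (simp only: inner_add_left inner_transpose_matrix_vector constraint_dual_pairing[OF Be])
  finally have "(Q2 *v (H *v u)) \<bullet> (H *v u) = 0 \<and> (Q1 *v ?e) \<bullet> ?e = 0"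
    using sym_pos_def_form_nonneg[OF Q1] sym_pos_def_form_nonneg[OF Q2]
    by (simp add: add_nonneg_eq_0_iff)
  then show "H *v u = 0" "F *v u = 0"
    using Be sym_pos_def_form_eq_0_iff[OF Q1] sym_pos_def_form_eq_0_iff[OF Q2] by auto
qed

lemma saddle_system_solvable:
  assumes b: "\<And>u. F *v u = 0 \<Longrightarrow> H *v u = 0 \<Longrightarrow> b \<bullet> u = 0"
  shows "\<exists>p z. F *v p = (B ** matrix_inv Q1 ** transpose B) *v z \<and>
               transpose F *v z = b - transpose H *v (Q2 *v (H *v p))"
proof -
  let ?K = "B ** matrix_inv Q1 ** transpose B"
  define L where "L = (\<lambda>(u, v). (transpose H *v (Q2 *v (H *v u)) + transpose F *v v, F *v u - ?K *v v))"
  have "linear L"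
    unfolding L_def by (rule linearI) (auto simp: algebra_simps simp del: transpose_matrix_vector)
  moreover have "L uv \<bullet> uv' = uv \<bullet> L uv'" for uv uv'
    using sym_pos_def_inner_commute[OF Q2] matrix_inv_congruence_inner_commute
    by (cases uv; cases uv') (simp add: L_def inner_add_left inner_add_right inner_diff_left
        inner_diff_right inner_transpose_matrix_vector inner_matrix_vector_transpose
        del: transpose_matrix_vector)
  ultimately have "(b, 0) \<in> range L \<longleftrightarrow> (\<forall>uv. L uv = 0 \<longrightarrow> (b, 0) \<bullet> uv = 0)"
    by (rule in_range_iff_orthogonal_kernel)
  moreover have "(b, 0) \<bullet> uv = 0" if "L uv = 0" for uv
    using that saddle_kernel b by (cases uv) (auto simp: L_def zero_prod_def)
  ultimately obtain p z where "L (p, z) = (b, 0)" by (metis surj_pair rangeE)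
  then show ?thesis unfolding L_def by (auto simp: algebra_simps)
qed

context
  fixes y :: "real^'l" and ell p xh :: "real^'n" and zh ph :: "real^'m"
  assumes p_zh: "F *v p = (B ** matrix_inv Q1 ** transpose B) *v zh"
    and zh_p: "transpose F *v zh = ell - transpose H *v (Q2 *v (H *v p))"
    and xh_ph: "F *v xh = (B ** matrix_inv Q1 ** transpose B) *v ph"
    and ph_xh: "transpose F *v ph = transpose H *v (Q2 *v (y - H *v xh))"
begin

abbreviation "min_misfit \<equiv> (y - H *v xh) \<bullet> (Q2 *v y)"

abbreviation "error_radius \<equiv> sqrt (1 - min_misfit) * sqrt (ell \<bullet> p)"

lemma constraint_xh: "B *v dual_noise Q1 B ph = F *v xh"
  by (simp add: xh_ph matrix_vector_dual_noise)

lemma constraint_p: "B *v dual_noise Q1 B zh = F *v p"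
  by (simp add: p_zh matrix_vector_dual_noise)

lemma ell_eq_weighted_inner:
  assumes "B *v e = F *v d"
  shows "ell \<bullet> d = weighted_inner Q1 Q2 H (dual_noise Q1 B zh, p) (e, d)"
  using constraint_dual_pairing[OF assms, of zh]
  by (simp add: weighted_inner_def zh_p inner_diff_left inner_transpose_matrix_vector
      del: transpose_matrix_vector)

lemma ell_p_eq_weighted_norm:
  "ell \<bullet> p = weighted_inner Q1 Q2 H (dual_noise Q1 B zh, p) (dual_noise Q1 B zh, p)"
  using ell_eq_weighted_inner[OF constraint_p] .

lemma ell_p_nonneg: "0 \<le> ell \<bullet> p"
  using weighted_inner_nonneg ell_p_eq_weighted_norm by simp

lemma residual_orthogonal:
  assumes "B *v e = F *v d"
  shows "(Q1 *v dual_noise Q1 B ph) \<bullet> e = (Q2 *v (y - H *v xh)) \<bullet> (H *v d)"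
  using constraint_dual_pairing[OF assms, of ph]
  by (simp add: ph_xh inner_transpose_matrix_vector del: transpose_matrix_vector)

lemma misfit_decomposition:
  assumes "F *v x = B *v f"
  shows "misfit Q1 Q2 H y x f = min_misfit
    + weighted_inner Q1 Q2 H (f - dual_noise Q1 B ph, x - xh) (f - dual_noise Q1 B ph, x - xh)"
proof -
  define fh e d a where "fh = dual_noise Q1 B ph" and "e = f - fh" and "d = x - xh"
    and "a = y - H *v xh"
  have ed: "B *v e = F *v d"
    using assms constraint_xh by (simp add: fh_def e_def d_def matrix_vector_mult_diff_distrib)
  have f: "f = fh + e" and r: "y - H *v x = a - H *v d"
    by (simp_all add: e_def d_def a_def matrix_vector_mult_diff_distrib)
  have "misfit Q1 Q2 H y x f = ((Q1 *v fh) \<bullet> fh + (Q2 *v a) \<bullet> a)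
      + 2 * ((Q1 *v fh) \<bullet> e - (Q2 *v a) \<bullet> (H *v d)) + weighted_inner Q1 Q2 H (e, d) (e, d)"
    unfolding misfit_def weighted_inner_def f r sym_pos_def_form_add[OF Q1]
      sym_pos_def_form_diff[OF Q2]
    by (simp add: algebra_simps)
  also have "(Q1 *v fh) \<bullet> e - (Q2 *v a) \<bullet> (H *v d) = 0"
    using residual_orthogonal[OF ed] by (simp add: fh_def a_def)
  also have "(Q1 *v fh) \<bullet> fh + (Q2 *v a) \<bullet> a = (Q2 *v a) \<bullet> (H *v xh + a)"
    using residual_orthogonal[OF constraint_xh] by (simp add: fh_def a_def inner_diff_right)
  also have "\<dots> = min_misfit"
    using sym_pos_def_inner_commute[OF Q2] by (simp add: a_def)
  finally show ?thesis by (simp add: fh_def e_def d_def)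
qed

lemma estimate_eq_observation_functional: "ell \<bullet> xh = (Q2 *v (H *v p)) \<bullet> y"
proof -
  have "ell \<bullet> xh = (Q1 *v dual_noise Q1 B ph) \<bullet> dual_noise Q1 B zh + (Q2 *v (H *v p)) \<bullet> (H *v xh)"
    using ell_eq_weighted_inner[OF constraint_xh] sym_pos_def_inner_commute[OF Q1]
    by (simp add: weighted_inner_def inner_commute)
  also have "\<dots> = (Q2 *v (H *v p)) \<bullet> (y - H *v xh) + (Q2 *v (H *v p)) \<bullet> (H *v xh)"
    using residual_orthogonal[OF constraint_p] sym_pos_def_inner_commute[OF Q2]
    by (metis inner_commute)
  finally show ?thesis by (simp add: inner_diff_right)
qed

lemma min_misfit_le_1:
  assumes "x \<in> adm_set F B H Q1 Q2 y"
  shows "min_misfit \<le> 1"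
proof -
  obtain f where f: "F *v x = B *v f" "misfit Q1 Q2 H y x f \<le> 1"
    using assms adm_set_eq_misfit by blast
  then show ?thesis
    using misfit_decomposition[OF f(1)] weighted_inner_nonneg[of "(f - dual_noise Q1 B ph, x - xh)"]
    by linarith
qed

lemma adm_set_ell_bound:
  assumes "x \<in> adm_set F B H Q1 Q2 y"
  shows "\<bar>ell \<bullet> x - ell \<bullet> xh\<bar> \<le> error_radius"
proof -
  obtain f where f: "F *v x = B *v f" "misfit Q1 Q2 H y x f \<le> 1"
    using assms adm_set_eq_misfit by blast
  define w where "w = (f - dual_noise Q1 B ph, x - xh)"
  have "B *v fst w = F *v snd w"
    using f(1) constraint_xh by (simp add: w_def matrix_vector_mult_diff_distrib)
  then have "(ell \<bullet> (x - xh))^2 \<le> (ell \<bullet> p) * weighted_inner Q1 Q2 H w w"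
    using weighted_inner_Cauchy_Schwarz ell_eq_weighted_inner ell_p_eq_weighted_norm
    by (metis prod.collapse w_def snd_conv)
  also have "\<dots> \<le> (ell \<bullet> p) * (1 - min_misfit)"
    using misfit_decomposition[OF f(1)] f(2) ell_p_nonneg by (simp add: w_def mult_left_mono)
  finally have "\<bar>ell \<bullet> (x - xh)\<bar> \<le> sqrt ((1 - min_misfit) * (ell \<bullet> p))"
    by (metis mult.commute real_sqrt_abs real_sqrt_le_mono)
  then show ?thesis by (simp add: inner_diff_right real_sqrt_mult)
qed

lemma adm_set_along_p:
  assumes "s^2 * (ell \<bullet> p) \<le> 1 - min_misfit"
  shows "xh + s *\<^sub>R p \<in> adm_set F B H Q1 Q2 y"
proof -
  let ?f = "dual_noise Q1 B ph + s *\<^sub>R dual_noise Q1 B zh"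
  have constraint: "F *v (xh + s *\<^sub>R p) = B *v ?f"
    using constraint_xh constraint_p
    by (simp add: matrix_vector_right_distrib matrix_vector_mult_scaleR)
  have "misfit Q1 Q2 H y (xh + s *\<^sub>R p) ?f = min_misfit
      + weighted_inner Q1 Q2 H (s *\<^sub>R (dual_noise Q1 B zh, p)) (s *\<^sub>R (dual_noise Q1 B zh, p))"
    using misfit_decomposition[OF constraint] by simp
  also have "\<dots> = min_misfit + s^2 * (ell \<bullet> p)"
    unfolding ell_p_eq_weighted_norm bilinear_lmul[OF bilinear_weighted_inner]
      bilinear_rmul[OF bilinear_weighted_inner]
    by (simp add: power2_eq_square)
  finally show ?thesis
    using constraint assms adm_set_eq_misfit by fastforce
qed

lemma post_error_eq:
  assumes "x \<in> adm_set F B H Q1 Q2 y"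
  shows "post_error F B H Q1 Q2 y ell c = ereal (error_radius + \<bar>c - ell \<bullet> xh\<bar>)"
proof -
  define t where "t = sqrt (1 - min_misfit) / sqrt (ell \<bullet> p)"
  have "t^2 * (ell \<bullet> p) \<le> 1 - min_misfit"
    using min_misfit_le_1[OF assms] ell_p_nonneg
    by (cases "ell \<bullet> p = 0") (simp_all add: t_def power_divide)
  then have "xh + t *\<^sub>R p \<in> adm_set F B H Q1 Q2 y" "xh - t *\<^sub>R p \<in> adm_set F B H Q1 Q2 y"
    using adm_set_along_p[of t] adm_set_along_p[of "- t"] by simp_all
  moreover have "t * (ell \<bullet> p) = error_radius"
    using real_div_sqrt[OF ell_p_nonneg]
    by (simp add: t_def times_divide_eq_right[symmetric] del: times_divide_eq_right)
  ultimately show ?thesis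
    unfolding post_error_def
    by (intro SUP_abs_diff_eq_radius[where a = "xh + t *\<^sub>R p" and b = "xh - t *\<^sub>R p"])
      (simp_all add: adm_set_ell_bound inner_add_right inner_diff_right)
qed

lemma is_minimax_est_iff:
  assumes "x \<in> adm_set F B H Q1 Q2 y"
  shows "is_minimax_est F B H Q1 Q2 y ell c \<longleftrightarrow> c = ell \<bullet> xh"
proof -
  have "xh \<in> adm_set F B H Q1 Q2 y"
    using adm_set_along_p[of 0] min_misfit_le_1[OF assms] by simp
  then have "(INF xt \<in> adm_set F B H Q1 Q2 y. post_error F B H Q1 Q2 y ell (ell \<bullet> xt))
      = ereal error_radius"
    unfolding post_error_eq[OF assms]
    by (intro antisym INF_lower2[of xh] INF_greatest) simp_all
  then show ?thesis
    unfolding is_minimax_est_def post_error_def[symmetric] post_error_eq[OF assms] by simp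
qed

end

end

theorem mainTheorem2:
  fixes F :: "real^'n^'m" and B :: "real^'p^'m" and H :: "real^'n^'l"
    and Q1 :: "real^'p^'p" and Q2 :: "real^'l^'l"
    and x :: "real^'n" and f :: "real^'p" and g :: "real^'l" and y :: "real^'l"
    and ell :: "real^'n"
  assumes Q1: "sym_pos_def Q1" and Q2: "sym_pos_def Q2"
    and state: "F *v x = B *v f"
    and obs: "y = H *v x + g"
    and fg: "(f, g) \<in> unc_set Q1 Q2"
  shows
   "(ell \<in> est_class F H \<longrightarrow>
      (\<exists>p zh. F *v p = (B ** matrix_inv Q1 ** transpose B) *v zh \<and>
               transpose F *v zh = ell - transpose H *v (Q2 *v (H *v p))) \<and>
      (\<exists>xh ph. F *v xh = (B ** matrix_inv Q1 ** transpose B) *v ph \<and>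
               transpose F *v ph = transpose H *v (Q2 *v (y - H *v xh))) \<and>
      (\<forall>p zh xh ph.
         F *v p = (B ** matrix_inv Q1 ** transpose B) *v zh \<and>
         transpose F *v zh = ell - transpose H *v (Q2 *v (H *v p)) \<and>
         F *v xh = (B ** matrix_inv Q1 ** transpose B) *v ph \<and>
         transpose F *v ph = transpose H *v (Q2 *v (y - H *v xh)) \<longrightarrow>
           (\<forall>c. is_minimax_est F B H Q1 Q2 y ell c \<longleftrightarrow> c = ell \<bullet> xh) \<and>
           ell \<bullet> xh = (Q2 *v (H *v p)) \<bullet> y \<and>
           post_error F B H Q1 Q2 y ell (ell \<bullet> xh) =
             ereal (sqrt (1 - (y - H *v xh) \<bullet> (Q2 *v y)) * sqrt (ell \<bullet> p))))
    \<and> (ell \<notin> est_class F H \<longrightarrow> (\<forall>c. post_error F B H Q1 Q2 y ell c = \<infinity>))"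
proof -
  have x: "x \<in> adm_set F B H Q1 Q2 y"
    using state obs fg unfolding adm_set_def by auto
  have "\<exists>xh ph. F *v xh = (B ** matrix_inv Q1 ** transpose B) *v ph \<and>
               transpose F *v ph = transpose H *v (Q2 *v (y - H *v xh))"
    using saddle_system_solvable[OF Q1 Q2, where H = H and b = "transpose H *v (Q2 *v y)"]
    by (simp add: inner_transpose_matrix_vector matrix_vector_mult_diff_distrib
        del: transpose_matrix_vector)
  moreover have "\<exists>p zh. F *v p = (B ** matrix_inv Q1 ** transpose B) *v zh \<and>
               transpose F *v zh = ell - transpose H *v (Q2 *v (H *v p))"
    if "ell \<in> est_class F H"
    using that saddle_system_solvable[OF Q1 Q2] est_class_iff_orthogonal_kernel by blast
  moreover have "(\<forall>c. is_minimax_est F B H Q1 Q2 y ell c \<longleftrightarrow> c = ell \<bullet> xh) \<and>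
      ell \<bullet> xh = (Q2 *v (H *v p)) \<bullet> y \<and>
      post_error F B H Q1 Q2 y ell (ell \<bullet> xh) =
        ereal (sqrt (1 - (y - H *v xh) \<bullet> (Q2 *v y)) * sqrt (ell \<bullet> p))"
    if "F *v p = (B ** matrix_inv Q1 ** transpose B) *v zh"
      "transpose F *v zh = ell - transpose H *v (Q2 *v (H *v p))"
      "F *v xh = (B ** matrix_inv Q1 ** transpose B) *v ph"
      "transpose F *v ph = transpose H *v (Q2 *v (y - H *v xh))" for p zh xh ph
    using is_minimax_est_iff[OF Q1 Q2 that x] post_error_eq[OF Q1 Q2 that x]
      estimate_eq_observation_functional[OF Q1 Q2 that] by simp
  ultimately show ?thesis
    using post_error_infinite[OF x] by blast
qed

end
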